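(* For every $x_G\in\mathcal{X}_G$, $$\underline{P}^{\mathrm{irr}}_G(x_G)=\prod_{s\in G}\underline{P}_{s\mid x_{P(s)}}(x_s)\quad\text{and}\quad\overline{P}^{\mathrm{irr}}_G(x_G)=\prod_{s\in G}\overline{P}_{s\mid x_{P(s)}}(x_s),$$ where $x_s$ and $x_{P(s)}$ are the restrictions of $x_G$.
   Context: Setting: $G$ is a finite set of nodes forming a DAG; node $s$ carries a variable $X_s$ with finite nonempty state space $\mathcal{X}_s$; $\mathcal{X}_S=\times_{s\in S}\mathcal{X}_s$. $P(s)$: parents; $D(s)$: the set of nodes reachable from $s$ by a directed path of positive length; $N(s)=G\setminus(\{s\}\cup D(s))$. Local models: for every $s$ and $x_{P(s)}$, $\mathcal{M}_{s\mid x_{P(s)}}$ is a nonempty closed convex set of probability mass functions on $\mathcal{X}_s$; local lower/upper probabilities are $\underline{P}_{s\mid x_{P(s)}}(x_s)=\min\{p(x_s):p\in\mathcal{M}_{s\mid x_{P(s)}}\}$ and $\overline{P}_{s\mid x_{P(s)}}(x_s)=\max\{p(x_s):p\in\mathcal{M}_{s\mid x_{P(s)}}\}$. Full conditional probability measure on finite $\Omega$: $(A,B)\mapsto P(A\mid B)$ ($B\ne\emptyset$), (F1) $P(\cdot\mid B)$ a probability measure with $P(B\mid B)=1$; (F2) $P(A\cap C\mid B)=P(A\mid C\cap B)P(C\mid B)$ if $C\cap B\ne\emptyset$. The event $x_S$ is $\{z_G:z_S=x_S\}$; $P(A)=P(A\mid\mathcal{X}_G)$. Irrelevant natural extension $\mathcal{F}^{\mathrm{irr}}_G$: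 all full conditional probability measures $P$ on $\mathcal{X}_G$ with $P(X_s\mid x_{N(s)})\in\mathcal{M}_{s\mid x_{P(s)}}$ for all $s,x_{N(s)}$. $\underline{P}^{\mathrm{irr}}_G(A)=\inf\{P(A):P\in\mathcal{F}^{\mathrm{irr}}_G\}$ and $\overline{P}^{\mathrm{irr}}_G(A)=\sup\{P(A):P\in\mathcal{F}^{\mathrm{irr}}_G\}$. *)

theory Defs
  imports "HOL-Analysis.Analysis" "HOL-Library.FuncSet"
begin

(* Nodes have type 'n, states type 'v. G is the finite set of nodes,
   par s the set of parents of s, X s the state space of node s.
   A joint state x_G is an element of PiE G X (extensional to G). *)

definition edges :: "'n set \<Rightarrow> ('n \<Rightarrow> 'n set) \<Rightarrow> ('n \<times> 'n) set" where
  "edges G par = {(p, s). s \<in> G \<and> p \<in> par s}"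

definition is_dag :: "'n set \<Rightarrow> ('n \<Rightarrow> 'n set) \<Rightarrow> bool" where
  "is_dag G par \<longleftrightarrow> finite G \<and> (\<forall>s\<in>G. par s \<subseteq> G) \<and> acyclic (edges G par)"

definition desc :: "'n set \<Rightarrow> ('n \<Rightarrow> 'n set) \<Rightarrow> 'n \<Rightarrow> 'n set" where
  "desc G par s = {t. (s, t) \<in> (edges G par)\<^sup>+}"

definition nondesc :: "'n set \<Rightarrow> ('n \<Rightarrow> 'n set) \<Rightarrow> 'n \<Rightarrow> 'n set" where
  "nondesc G par s = G - ({s} \<union> desc G par s)"

definition event :: "'n set \<Rightarrow> ('n \<Rightarrow> 'v set) \<Rightarrow> 'n set \<Rightarrow> ('n \<Rightarrow> 'v) \<Rightarrow> ('n \<Rightarrow> 'v) set" where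
  "event G X S x = {z \<in> PiE G X. \<forall>s\<in>S. z s = x s}"

definition is_pmf_on :: "'v set \<Rightarrow> ('v \<Rightarrow> real) \<Rightarrow> bool" where
  "is_pmf_on A p \<longleftrightarrow> (\<forall>v\<in>A. 0 \<le> p v) \<and> (\<forall>v. v \<notin> A \<longrightarrow> p v = 0) \<and> sum p A = 1"

definition convex_fun_set :: "('v \<Rightarrow> real) set \<Rightarrow> bool" where
  "convex_fun_set M \<longleftrightarrow>
     (\<forall>p\<in>M. \<forall>q\<in>M. \<forall>t::real. 0 \<le> t \<and> t \<le> 1 \<longrightarrow> (\<lambda>v. t * p v + (1 - t) * q v) \<in> M)"

definition local_model :: "'v set \<Rightarrow> ('v \<Rightarrow> real) set \<Rightarrow> bool" where
  "local_model A M \<longleftrightarrow> M \<noteq> {} \<and> closed M \<and> convex_fun_set M \<and> (\<forall>p\<in>M. is_pmf_on A p)"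

definition lowerP :: "('v \<Rightarrow> real) set \<Rightarrow> 'v \<Rightarrow> real" where
  "lowerP M v = Inf ((\<lambda>p. p v) ` M)"

definition upperP :: "('v \<Rightarrow> real) set \<Rightarrow> 'v \<Rightarrow> real" where
  "upperP M v = Sup ((\<lambda>p. p v) ` M)"

(* full conditional probability measure on the finite set \<Omega>:
   P A B is defined (meaningful) for A \<subseteq> \<Omega> and nonempty B \<subseteq> \<Omega> *)
definition full_cond_prob :: "'a set \<Rightarrow> ('a set \<Rightarrow> 'a set \<Rightarrow> real) \<Rightarrow> bool" where
  "full_cond_prob \<Omega> P \<longleftrightarrow>
     (\<forall>B. B \<subseteq> \<Omega> \<and> B \<noteq> {} \<longrightarrow>
        (\<forall>A. A \<subseteq> \<Omega> \<longrightarrow> 0 \<le> P A B) \<and> P \<Omega> B = 1 \<and>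
        (\<forall>A C. A \<subseteq> \<Omega> \<and> C \<subseteq> \<Omega> \<and> A \<inter> C = {} \<longrightarrow> P (A \<union> C) B = P A B + P C B) \<and>
        P B B = 1) \<and>
     (\<forall>A B C. A \<subseteq> \<Omega> \<and> B \<subseteq> \<Omega> \<and> C \<subseteq> \<Omega> \<and> C \<inter> B \<noteq> {} \<longrightarrow>
        P (A \<inter> C) B = P A (C \<inter> B) * P C B)"

definition cond_mass :: "'n set \<Rightarrow> ('n \<Rightarrow> 'n set) \<Rightarrow> ('n \<Rightarrow> 'v set)
    \<Rightarrow> (('n \<Rightarrow> 'v) set \<Rightarrow> ('n \<Rightarrow> 'v) set \<Rightarrow> real) \<Rightarrow> 'n \<Rightarrow> ('n \<Rightarrow> 'v) \<Rightarrow> 'v \<Rightarrow> real" where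
  "cond_mass G par X P s x = (\<lambda>v. if v \<in> X s
       then P (event G X {s} (x(s := v))) (event G X (nondesc G par s) x) else 0)"

(* irrelevant natural extension F^irr_G; M s y is the local model M_{s|y}
   for y an assignment of the parents (extensional to par s) *)
definition irr_ext :: "'n set \<Rightarrow> ('n \<Rightarrow> 'n set) \<Rightarrow> ('n \<Rightarrow> 'v set)
    \<Rightarrow> ('n \<Rightarrow> ('n \<Rightarrow> 'v) \<Rightarrow> ('v \<Rightarrow> real) set)
    \<Rightarrow> (('n \<Rightarrow> 'v) set \<Rightarrow> ('n \<Rightarrow> 'v) set \<Rightarrow> real) set" where
  "irr_ext G par X M = {P. full_cond_prob (PiE G X) P \<and>
      (\<forall>s\<in>G. \<forall>x\<in>PiE G X. cond_mass G par X P s x \<in> M s (restrict x (par s)))}"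

definition lower_irr :: "'n set \<Rightarrow> ('n \<Rightarrow> 'n set) \<Rightarrow> ('n \<Rightarrow> 'v set)
    \<Rightarrow> ('n \<Rightarrow> ('n \<Rightarrow> 'v) \<Rightarrow> ('v \<Rightarrow> real) set) \<Rightarrow> ('n \<Rightarrow> 'v) set \<Rightarrow> real" where
  "lower_irr G par X M A = Inf ((\<lambda>P. P A (PiE G X)) ` irr_ext G par X M)"

definition upper_irr :: "'n set \<Rightarrow> ('n \<Rightarrow> 'n set) \<Rightarrow> ('n \<Rightarrow> 'v set)
    \<Rightarrow> ('n \<Rightarrow> ('n \<Rightarrow> 'v) \<Rightarrow> ('v \<Rightarrow> real) set) \<Rightarrow> ('n \<Rightarrow> 'v) set \<Rightarrow> real" where
  "upper_irr G par X M A = Sup ((\<lambda>P. P A (PiE G X)) ` irr_ext G par X M)"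

end

theory Submission
  imports Defs
begin

text \<open>
  Let \<open>P\<close> be in the irrelevant natural extension and \<open>S\<close> an ancestral set of nodes, and pick
  \<open>s \<in> S\<close> with no descendant in \<open>S\<close>. The event \<open>x_{S-{s}}\<close> is a disjoint union of cylinders
  over the non-descendants \<open>N(s)\<close>, all fixing the parents of \<open>s\<close> to \<open>x_{P(s)}\<close>; on each of them
  \<open>P(x_s | -)\<close> is a value of a mass function in the local model, so \<open>P(x_s | x_{S-{s}})\<close> lies
  between the local lower and upper probabilities. Multiplying along
  \<open>P(x_S) = P(x_s | x_{S-{s}}) P(x_{S-{s}})\<close> bounds \<open>P(x_G)\<close> by the two products.

  The bounds are attained: choose in every local model a mass function \<open>q\<close> minimising (or
  maximising) the value at \<open>x_s\<close>. The product of the \<open>q\<close>'s may vanish on conditioning events,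
  so it is turned into a full conditional measure lexicographically: given \<open>B\<close>, the mass sits on
  the points of \<open>B\<close> with the fewest vanishing factors, proportional to the product of their
  nonvanishing factors. Summing out the descendants of \<open>s\<close>, sinks first, shows that its
  conditionals given \<open>N(s)\<close> are the chosen \<open>q\<close>'s.
\<close>

section \<open>Full conditional probability measures\<close>

lemma full_cond_prob_given:
  assumes "full_cond_prob \<Omega> P" "B \<subseteq> \<Omega>" "B \<noteq> {}"
  shows "(\<forall>A. A \<subseteq> \<Omega> \<longrightarrow> 0 \<le> P A B) \<and> P \<Omega> B = 1 \<and>
    (\<forall>A C. A \<subseteq> \<Omega> \<and> C \<subseteq> \<Omega> \<and> A \<inter> C = {} \<longrightarrow> P (A \<union> C) B = P A B + P C B) \<and> P B B = 1"
  using assms(1)[unfolded full_cond_prob_def, THEN conjunct1, rule_format, OF conjI[OF assms(2,3)]] .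

lemma full_cond_prob_nonneg:
  "full_cond_prob \<Omega> P \<Longrightarrow> B \<subseteq> \<Omega> \<Longrightarrow> B \<noteq> {} \<Longrightarrow> A \<subseteq> \<Omega> \<Longrightarrow> 0 \<le> P A B"
  by (drule full_cond_prob_given) auto

lemma full_cond_prob_add:
  "full_cond_prob \<Omega> P \<Longrightarrow> B \<subseteq> \<Omega> \<Longrightarrow> B \<noteq> {} \<Longrightarrow> A \<subseteq> \<Omega> \<Longrightarrow> C \<subseteq> \<Omega> \<Longrightarrow> A \<inter> C = {}
    \<Longrightarrow> P (A \<union> C) B = P A B + P C B"
  by (drule full_cond_prob_given) auto

lemma full_cond_prob_self:
  "full_cond_prob \<Omega> P \<Longrightarrow> B \<subseteq> \<Omega> \<Longrightarrow> B \<noteq> {} \<Longrightarrow> P B B = 1"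
  by (drule full_cond_prob_given) auto

lemma full_cond_prob_mult:
  assumes "full_cond_prob \<Omega> P" "A \<subseteq> \<Omega>" "B \<subseteq> \<Omega>" "C \<subseteq> \<Omega>" "C \<inter> B \<noteq> {}"
  shows "P (A \<inter> C) B = P A (C \<inter> B) * P C B"
  using assms(1)[unfolded full_cond_prob_def, THEN conjunct2, rule_format] assms(2-5) by blast

lemma full_cond_prob_empty:
  assumes "full_cond_prob \<Omega> P" "B \<subseteq> \<Omega>" "B \<noteq> {}"
  shows "P {} B = 0"
  using full_cond_prob_add[OF assms, of "{}" "{}"] by simp

lemma full_cond_prob_UN_disjoint:
  assumes P: "full_cond_prob \<Omega> P" and B: "B \<subseteq> \<Omega>" "B \<noteq> {}"
    and "finite I" "\<And>i. i \<in> I \<Longrightarrow> f i \<subseteq> \<Omega>" "disjoint_family_on f I"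
  shows "P (\<Union>i\<in>I. f i) B = (\<Sum>i\<in>I. P (f i) B)"
  using assms(4-6)
proof (induction I rule: finite_induct)
  case empty
  then show ?case using full_cond_prob_empty[OF P B] by simp
next
  case (insert i I)
  have "f i \<inter> (\<Union>j\<in>I. f j) = {}"
    using insert.prems(2) insert.hyps(2) by (fastforce simp: disjoint_family_on_def)
  moreover have "disjoint_family_on f I"
    using insert.prems(2) by (rule disjoint_family_on_mono[rotated]) blast
  ultimately show ?case
    using insert full_cond_prob_add[OF P B, of "f i" "\<Union>j\<in>I. f j"] by auto
qed

text \<open>Conditioning on a union of disjoint events gives a convex combination of the conditionals.\<close>

lemma full_cond_prob_partition_bounds:
  assumes P: "full_cond_prob \<Omega> P" and A: "A \<subseteq> \<Omega>" and B: "B \<subseteq> \<Omega>" "B \<noteq> {}"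
    and F: "finite F" "\<Union>F = B" "disjoint F" "{} \<notin> F"
    and bounds: "\<And>E. E \<in> F \<Longrightarrow> lo \<le> P A E \<and> P A E \<le> up"
  shows "lo \<le> P A B \<and> P A B \<le> up"
proof -
  have E: "E \<subseteq> \<Omega>" "E \<inter> B = E" "E \<noteq> {}" if "E \<in> F" for E
    using that F B by auto
  have disj: "disjoint_family_on (\<lambda>E. C \<inter> E) F" for C
    using F(3) by (auto simp: disjoint_family_on_def dest: disjointD)
  have "P A B = P (A \<inter> B) B"
    using full_cond_prob_mult[OF P A B(1) B(1)] full_cond_prob_self[OF P B] B by simp
  also have "A \<inter> B = (\<Union>E\<in>F. A \<inter> E)"
    using F(2) by blast
  also have "P (\<Union>E\<in>F. A \<inter> E) B = (\<Sum>E\<in>F. P (A \<inter> E) B)"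
    by (rule full_cond_prob_UN_disjoint[OF P B F(1) _ disj]) (use A in blast)
  also have "\<dots> = (\<Sum>E\<in>F. P A E * P E B)"
  proof (rule sum.cong[OF refl])
    fix E
    assume "E \<in> F"
    then show "P (A \<inter> E) B = P A E * P E B"
      using full_cond_prob_mult[OF P A B(1), of E] E[of E] by simp
  qed
  finally have PA: "P A B = (\<Sum>E\<in>F. P A E * P E B)" .
  have "P (\<Union>E\<in>F. E) B = (\<Sum>E\<in>F. P E B)"
    by (rule full_cond_prob_UN_disjoint[OF P B F(1)])
      (use E F(3) in \<open>auto simp: disjoint_family_on_def dest: disjointD\<close>)
  then have total: "(\<Sum>E\<in>F. P E B) = 1"
    using full_cond_prob_self[OF P B] F(2) by simp
  have nonneg: "0 \<le> P E B" if "E \<in> F" for E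
    using full_cond_prob_nonneg[OF P B] E[OF that] by blast
  have "lo = (\<Sum>E\<in>F. lo * P E B)"
    using total by (simp add: sum_distrib_left[symmetric])
  also have "\<dots> \<le> (\<Sum>E\<in>F. P A E * P E B)"
    using bounds nonneg by (intro sum_mono mult_right_mono) auto
  finally have "lo \<le> P A B" using PA by simp
  moreover have "(\<Sum>E\<in>F. P A E * P E B) \<le> (\<Sum>E\<in>F. up * P E B)"
    using bounds nonneg by (intro sum_mono mult_right_mono) auto
  then have "P A B \<le> up"
    using PA total by (simp add: sum_distrib_left[symmetric])
  ultimately show ?thesis ..
qed

lemma mult_interval_bounds:
  fixes a b :: real
  assumes "0 \<le> l\<^sub>1" "l\<^sub>1 \<le> a \<and> a \<le> u\<^sub>1" "0 \<le> l\<^sub>2" "l\<^sub>2 \<le> b \<and> b \<le> u\<^sub>2"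
  shows "l\<^sub>1 * l\<^sub>2 \<le> a * b \<and> a * b \<le> u\<^sub>1 * u\<^sub>2"
proof
  show "l\<^sub>1 * l\<^sub>2 \<le> a * b"
    by (rule mult_mono) (use assms in linarith)+
  show "a * b \<le> u\<^sub>1 * u\<^sub>2"
    by (rule mult_mono) (use assms in linarith)+
qed

section \<open>Local models\<close>

lemma is_pmf_on_nonneg: "is_pmf_on A p \<Longrightarrow> 0 \<le> p v"
  by (cases "v \<in> A") (auto simp: is_pmf_on_def)

lemma is_pmf_on_le_one:
  assumes "is_pmf_on A p" "finite A"
  shows "p v \<le> 1"
proof (cases "v \<in> A")
  case True
  then have "p v \<le> sum p A"
    using assms by (intro member_le_sum) (auto simp: is_pmf_on_def)
  then show ?thesis using assms by (simp add: is_pmf_on_def)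
qed (use assms in \<open>simp add: is_pmf_on_def\<close>)

lemma local_model_compact:
  assumes M: "local_model A M" and A: "finite A"
  shows "compact M"
proof -
  define K where "K = PiE UNIV (\<lambda>w. if w \<in> A then {0..1::real} else {0})"
  have "compactin (product_topology (\<lambda>_. euclidean) UNIV) K"
    unfolding K_def by (subst compactin_PiE) auto
  then have "compact K" by (simp add: euclidean_product_topology)
  moreover have "M \<subseteq> K"
  proof
    fix p
    assume "p \<in> M"
    then have p: "is_pmf_on A p"
      using M by (simp add: local_model_def)
    then show "p \<in> K"
      using is_pmf_on_le_one[OF p A] is_pmf_on_nonneg[OF p]
      by (auto simp: K_def is_pmf_on_def PiE_def Pi_def)
  qed
  ultimately show ?thesis
    using M compact_Int_closed[of K M] by (simp add: local_model_def Int_absorb1)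
qed

lemma local_model_lowerP_attained:
  assumes "local_model A M" "finite A"
  shows "\<exists>p\<in>M. p v = lowerP M v"
proof -
  obtain p where "p \<in> M" "\<forall>p'\<in>M. p v \<le> p' v"
    using continuous_attains_inf[OF local_model_compact[OF assms], of "\<lambda>p. p v"] assms
    by (auto simp: local_model_def intro: continuous_on_subset[OF continuous_on_product_coordinates])
  then show ?thesis
    unfolding lowerP_def by (intro bexI[of _ p] cInf_eq_minimum[symmetric]) auto
qed

lemma local_model_upperP_attained:
  assumes "local_model A M" "finite A"
  shows "\<exists>p\<in>M. p v = upperP M v"
proof -
  obtain p where "p \<in> M" "\<forall>p'\<in>M. p' v \<le> p v"
    using continuous_attains_sup[OF local_model_compact[OF assms], of "\<lambda>p. p v"] assms
    by (auto simp: local_model_def intro: continuous_on_subset[OF continuous_on_product_coordinates])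
  then show ?thesis
    unfolding upperP_def by (intro bexI[of _ p] cSup_eq_maximum[symmetric]) auto
qed

lemma lowerP_le:
  assumes "local_model A M" "p \<in> M"
  shows "lowerP M v \<le> p v"
  unfolding lowerP_def using assms
  by (intro cInf_lower bdd_belowI[of _ 0]) (auto simp: local_model_def intro: is_pmf_on_nonneg)

lemma le_upperP:
  assumes "local_model A M" "finite A" "p \<in> M"
  shows "p v \<le> upperP M v"
  unfolding upperP_def using assms
  by (intro cSup_upper bdd_aboveI[of _ 1]) (auto simp: local_model_def intro: is_pmf_on_le_one)

lemma lowerP_nonneg:
  assumes "local_model A M"
  shows "0 \<le> lowerP M v"
  unfolding lowerP_def using assms
  by (intro cInf_greatest) (auto simp: local_model_def intro: is_pmf_on_nonneg)

section \<open>Credal networks\<close>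

locale credal_net =
  fixes G :: "'n set" and par :: "'n \<Rightarrow> 'n set" and X :: "'n \<Rightarrow> 'v set"
    and M :: "'n \<Rightarrow> ('n \<Rightarrow> 'v) \<Rightarrow> ('v \<Rightarrow> real) set"
  assumes dag: "is_dag G par"
    and states: "\<And>s. s \<in> G \<Longrightarrow> finite (X s) \<and> X s \<noteq> {}"
    and models: "\<And>s y. s \<in> G \<Longrightarrow> y \<in> PiE (par s) X \<Longrightarrow> local_model (X s) (M s y)"
begin

abbreviation \<Omega> :: "('n \<Rightarrow> 'v) set" where
  "\<Omega> \<equiv> PiE G X"

definition ancestral :: "'n set \<Rightarrow> bool" where
  "ancestral S \<longleftrightarrow> S \<subseteq> G \<and> (\<forall>t\<in>S. par t \<subseteq> S)"

lemma finite_nodes: "finite G"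
  using dag by (simp add: is_dag_def)

lemma parents_subset: "s \<in> G \<Longrightarrow> par s \<subseteq> G"
  using dag by (simp add: is_dag_def)

lemma acyclic_edges: "acyclic (edges G par)"
  using dag by (simp add: is_dag_def)

lemma edges_iff: "(p, s) \<in> edges G par \<longleftrightarrow> s \<in> G \<and> p \<in> par s"
  by (simp add: edges_def)

lemma finite_edges: "finite (edges G par)"
proof -
  have "edges G par \<subseteq> G \<times> G"
    using parents_subset by (auto simp: edges_def)
  then show ?thesis
    using finite_nodes by (meson finite_SigmaI finite_subset)
qed

lemma finite_\<Omega>: "finite \<Omega>"
  using finite_nodes states by (intro finite_PiE) auto

lemma ancestral_nodes: "ancestral G"
  using parents_subset by (simp add: ancestral_def)

lemma parent_not_self:
  assumes "s \<in> G"
  shows "s \<notin> par s"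
proof
  assume "s \<in> par s"
  then have "(s, s) \<in> (edges G par)\<^sup>+"
    using assms by (simp add: edges_iff r_into_trancl')
  then show False
    using acyclic_edges by (simp add: acyclic_def)
qed

lemma exists_sink:
  assumes "U \<subseteq> G" "U \<noteq> {}"
  shows "\<exists>u\<in>U. \<forall>t\<in>U. u \<notin> par t"
proof -
  have "wf ((edges G par)\<inverse>)"
    by (rule finite_acyclic_wf_converse[OF finite_edges acyclic_edges])
  then obtain u where "u \<in> U" "\<And>t. (t, u) \<in> (edges G par)\<inverse> \<Longrightarrow> t \<notin> U"
    using assms(2) by (metis ex_in_conv wfE_min)
  then show ?thesis
    using assms(1) by (auto simp: edges_iff)
qed

lemma exists_maximal:
  assumes "S \<noteq> {}"
  shows "\<exists>s\<in>S. \<forall>t\<in>S. t \<notin> desc G par s"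
proof -
  have "wf (((edges G par)\<inverse>)\<^sup>+)"
    by (rule wf_trancl[OF finite_acyclic_wf_converse[OF finite_edges acyclic_edges]])
  then obtain s where "s \<in> S" "\<And>t. (t, s) \<in> ((edges G par)\<inverse>)\<^sup>+ \<Longrightarrow> t \<notin> S"
    using assms by (metis ex_in_conv wfE_min)
  then show ?thesis
    by (auto simp: desc_def trancl_converse)
qed

lemma desc_subset: "desc G par s \<subseteq> G"
  by (auto simp: desc_def edges_iff dest!: tranclD2)

lemma not_in_desc_self: "s \<notin> desc G par s"
  using acyclic_edges by (auto simp: desc_def acyclic_def)

lemma parents_subset_nondesc:
  assumes s: "s \<in> G"
  shows "par s \<subseteq> nondesc G par s"
proof
  fix p
  assume p: "p \<in> par s"
  then have "(p, s) \<in> edges G par"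
    using s by (simp add: edges_iff)
  then have "p \<notin> desc G par s"
    using acyclic_edges by (auto simp: desc_def acyclic_def dest: trancl_into_trancl2)
  then show "p \<in> nondesc G par s"
    using parents_subset[OF s] parent_not_self[OF s] p by (auto simp: nondesc_def)
qed

lemma ancestral_nondesc: "ancestral (nondesc G par s)"
  unfolding ancestral_def
proof (intro conjI ballI subsetI)
  fix t p
  assume t: "t \<in> nondesc G par s" and p: "p \<in> par t"
  then have "t \<in> G" "t \<noteq> s" "t \<notin> desc G par s"
    by (auto simp: nondesc_def)
  moreover have "(p, t) \<in> edges G par"
    using p \<open>t \<in> G\<close> by (simp add: edges_iff)
  ultimately show "p \<in> nondesc G par s"
    using parents_subset p by (auto simp: nondesc_def desc_def intro: trancl_into_trancl)
qed (auto simp: nondesc_def)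

lemma ancestral_Diff_maximal:
  assumes S: "ancestral S" and s: "s \<in> S" and max: "\<forall>t\<in>S. t \<notin> desc G par s"
  shows "ancestral (S - {s})"
  unfolding ancestral_def
proof (intro conjI ballI subsetI)
  fix t p
  assume t: "t \<in> S - {s}" and p: "p \<in> par t"
  have "s \<notin> par t"
  proof
    assume "s \<in> par t"
    then have "(s, t) \<in> edges G par"
      using t S by (auto simp: ancestral_def edges_iff)
    then show False
      using t max by (auto simp: desc_def)
  qed
  then show "p \<in> S - {s}"
    using t p S by (auto simp: ancestral_def)
qed (use S in \<open>auto simp: ancestral_def\<close>)

lemma restrict_parents_PiE: "z \<in> \<Omega> \<Longrightarrow> t \<in> G \<Longrightarrow> restrict z (par t) \<in> PiE (par t) X"
  using parents_subset by (auto simp: PiE_def Pi_def)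

lemma event_subset: "event G X S y \<subseteq> \<Omega>"
  by (auto simp: event_def)

lemma event_empty: "event G X {} y = \<Omega>"
  by (auto simp: event_def)

lemma event_nodes: "y \<in> \<Omega> \<Longrightarrow> event G X G y = {y}"
  by (auto simp: event_def intro: PiE_ext)

lemma fun_upd_in_\<Omega>: "z \<in> \<Omega> \<Longrightarrow> u \<in> G \<Longrightarrow> v \<in> X u \<Longrightarrow> z(u := v) \<in> \<Omega>"
  using PiE_fun_upd[of v X u z G] by (simp add: insert_absorb)

lemma sum_event_insert:
  assumes y: "y \<in> \<Omega>" and u: "u \<in> G" "u \<notin> U"
  shows "(\<Sum>z\<in>event G X (G - insert u U) y. f z) =
         (\<Sum>z\<in>event G X (G - U) y. \<Sum>v\<in>X u. f (z(u := v)))"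
proof -
  let ?h = "\<lambda>(z, v). z(u := v)"
  have image: "event G X (G - insert u U) y = ?h ` (event G X (G - U) y \<times> X u)"
  proof (intro equalityI subsetI)
    fix z
    assume z: "z \<in> event G X (G - insert u U) y"
    then have "z(u := y u) \<in> event G X (G - U) y" "z u \<in> X u"
      using y u fun_upd_in_\<Omega> by (auto simp: event_def)
    then show "z \<in> ?h ` (event G X (G - U) y \<times> X u)"
      by (intro image_eqI[of _ _ "(z(u := y u), z u)"]) auto
  next
    fix z
    assume "z \<in> ?h ` (event G X (G - U) y \<times> X u)"
    then obtain z' v where z': "z' \<in> event G X (G - U) y" "v \<in> X u" "z = z'(u := v)"
      by auto
    then have "z \<in> \<Omega>"
      using fun_upd_in_\<Omega>[OF _ u(1)] by (auto simp: event_def)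
    with z' show "z \<in> event G X (G - insert u U) y"
      by (auto simp: event_def)
  qed
  have inj: "inj_on ?h (event G X (G - U) y \<times> X u)"
  proof (rule inj_onI, clarify)
    fix z v z' v'
    assume "z \<in> event G X (G - U) y" "z' \<in> event G X (G - U) y" and eq: "z(u := v) = z'(u := v')"
    then have "z u = z' u"
      using u by (simp add: event_def)
    then show "z = z' \<and> v = v'"
      using eq by (metis fun_upd_idem_iff fun_upd_same fun_upd_upd)
  qed
  have "(\<Sum>z\<in>event G X (G - insert u U) y. f z) = (\<Sum>p\<in>event G X (G - U) y \<times> X u. f (?h p))"
    unfolding image using sum.reindex[OF inj, of f] by (simp add: comp_def)
  then show ?thesis
    by (simp only: sum.cartesian_product' prod.case)
qed

lemma local_lowerP_nonneg: "t \<in> G \<Longrightarrow> x \<in> \<Omega> \<Longrightarrow> 0 \<le> lowerP (M t (restrict x (par t))) (x t)"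
  by (rule lowerP_nonneg[OF models[OF _ restrict_parents_PiE]])

lemma irr_ext_cond_bounds:
  assumes P: "P \<in> irr_ext G par X M" and s: "s \<in> G" and x: "x \<in> \<Omega>"
    and B: "B \<subseteq> \<Omega>" "B \<noteq> {}"
    and cyl: "\<And>y. y \<in> B \<Longrightarrow>
      event G X (nondesc G par s) y \<subseteq> B \<and> restrict y (par s) = restrict x (par s)"
  shows "lowerP (M s (restrict x (par s))) (x s) \<le> P (event G X {s} x) B \<and>
         P (event G X {s} x) B \<le> upperP (M s (restrict x (par s))) (x s)"
proof (rule full_cond_prob_partition_bounds[where F = "(\<lambda>y. event G X (nondesc G par s) y) ` B"])
  show "full_cond_prob \<Omega> P"
    using P by (simp add: irr_ext_def)
  show "finite ((\<lambda>y. event G X (nondesc G par s) y) ` B)"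
    using B finite_\<Omega> finite_subset by blast
  have self: "y \<in> event G X (nondesc G par s) y" if "y \<in> B" for y
    using that B by (auto simp: event_def)
  then show "\<Union> ((\<lambda>y. event G X (nondesc G par s) y) ` B) = B"
    using cyl by blast
  show "{} \<notin> (\<lambda>y. event G X (nondesc G par s) y) ` B"
    using self by blast
  show "disjoint ((\<lambda>y. event G X (nondesc G par s) y) ` B)"
  proof (rule disjointI, rule ccontr)
    fix E E'
    assume EE: "E \<in> (\<lambda>y. event G X (nondesc G par s) y) ` B" "E' \<in> (\<lambda>y. event G X (nondesc G par s) y) ` B"
      "E \<noteq> E'" "E \<inter> E' \<noteq> {}"
    then obtain z where "z \<in> E" "z \<in> E'" by blast
    then have "E = event G X (nondesc G par s) z" "E' = event G X (nondesc G par s) z"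
      using EE(1,2) by (auto simp: event_def)
    with EE(3) show False by simp
  qed
  fix E
  assume "E \<in> (\<lambda>y. event G X (nondesc G par s) y) ` B"
  then obtain y where y: "y \<in> B" "E = event G X (nondesc G par s) y" by blast
  have "cond_mass G par X P s y \<in> M s (restrict y (par s))"
    using P s y B by (auto simp: irr_ext_def)
  then have mass: "cond_mass G par X P s y \<in> M s (restrict x (par s))"
    using cyl y(1) by simp
  have "event G X {s} (y(s := x s)) = event G X {s} x"
    by (auto simp: event_def)
  then have "cond_mass G par X P s y (x s) = P (event G X {s} x) E"
    using x s y by (simp add: cond_mass_def PiE_mem)
  moreover have model: "local_model (X s) (M s (restrict x (par s)))"
    using models s restrict_parents_PiE x by blast
  ultimately show "lowerP (M s (restrict x (par s))) (x s) \<le> P (event G X {s} x) E \<and>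
      P (event G X {s} x) E \<le> upperP (M s (restrict x (par s))) (x s)"
    using lowerP_le[OF model mass, of "x s"] le_upperP[OF model _ mass, of "x s"] states s by simp
qed (simp_all add: B event_subset)

lemma irr_ext_maximal_cond_bounds:
  assumes P: "P \<in> irr_ext G par X M" and x: "x \<in> \<Omega>" and S: "ancestral S"
    and s: "s \<in> S" and max: "\<forall>t\<in>S. t \<notin> desc G par s"
  shows "lowerP (M s (restrict x (par s))) (x s) \<le> P (event G X {s} x) (event G X (S - {s}) x) \<and>
         P (event G X {s} x) (event G X (S - {s}) x) \<le> upperP (M s (restrict x (par s))) (x s)"
proof (rule irr_ext_cond_bounds[OF P _ x event_subset])
  have SG: "S \<subseteq> G"
    using S by (simp add: ancestral_def)
  then show "s \<in> G"
    using s by blast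
  show "event G X (S - {s}) x \<noteq> {}"
    using x by (auto simp: event_def)
  have parents: "par s \<subseteq> S - {s}"
    using S s parent_not_self \<open>s \<in> G\<close> by (auto simp: ancestral_def)
  have nondesc: "S - {s} \<subseteq> nondesc G par s"
    using SG max by (auto simp: nondesc_def)
  show "event G X (nondesc G par s) y \<subseteq> event G X (S - {s}) x \<and>
      restrict y (par s) = restrict x (par s)" if "y \<in> event G X (S - {s}) x" for y
  proof
    show "event G X (nondesc G par s) y \<subseteq> event G X (S - {s}) x"
    proof
      fix z
      assume z: "z \<in> event G X (nondesc G par s) y"
      have "z t = x t" if "t \<in> S - {s}" for t
        using z \<open>y \<in> event G X (S - {s}) x\<close> nondesc[THEN subsetD, OF that] that
        by (simp add: event_def)
      with z show "z \<in> event G X (S - {s}) x"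
        by (simp add: event_def)
    qed
    show "restrict y (par s) = restrict x (par s)"
      using that parents by (intro restrict_ext) (auto simp: event_def)
  qed
qed

lemma irr_ext_event_bounds:
  assumes P: "P \<in> irr_ext G par X M" and x: "x \<in> \<Omega>" and S: "ancestral S"
  shows "(\<Prod>t\<in>S. lowerP (M t (restrict x (par t))) (x t)) \<le> P (event G X S x) \<Omega> \<and>
         P (event G X S x) \<Omega> \<le> (\<Prod>t\<in>S. upperP (M t (restrict x (par t))) (x t))"
  using S
proof (induction "card S" arbitrary: S rule: less_induct)
  case less
  have fcp: "full_cond_prob \<Omega> P"
    using P by (simp add: irr_ext_def)
  show ?case
  proof (cases "S = {}")
    case True
    have "P \<Omega> \<Omega> = 1"
      using full_cond_prob_self[OF fcp order_refl] x by blast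
    with True show ?thesis
      by (simp add: event_empty)
  next
    case False
    obtain s where s: "s \<in> S" and max: "\<forall>t\<in>S. t \<notin> desc G par s"
      using exists_maximal[OF False] by blast
    define S' where "S' = S - {s}"
    define B where "B = event G X S' x"
    have SG: "S \<subseteq> G"
      using less.prems by (simp add: ancestral_def)
    then have finS: "finite S" and sG: "s \<in> G"
      using finite_subset[OF _ finite_nodes] s by blast+
    have B: "B \<subseteq> \<Omega>" "B \<noteq> {}"
      using x by (auto simp: B_def event_def)
    have local: "lowerP (M s (restrict x (par s))) (x s) \<le> P (event G X {s} x) B \<and>
        P (event G X {s} x) B \<le> upperP (M s (restrict x (par s))) (x s)"
      unfolding B_def S'_def by (rule irr_ext_maximal_cond_bounds[OF P x less.prems s max])
    have IH: "(\<Prod>t\<in>S'. lowerP (M t (restrict x (par t))) (x t)) \<le> P B \<Omega> \<and>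
        P B \<Omega> \<le> (\<Prod>t\<in>S'. upperP (M t (restrict x (par t))) (x t))"
      unfolding B_def S'_def
      by (rule less.hyps) (use card_Diff1_less[OF finS s] less.prems s max ancestral_Diff_maximal in auto)
    have "event G X S x = event G X {s} x \<inter> B"
      using s by (auto simp: B_def S'_def event_def)
    then have chain: "P (event G X S x) \<Omega> = P (event G X {s} x) B * P B \<Omega>"
      using full_cond_prob_mult[OF fcp event_subset order_refl B(1)] B by (simp add: Int_absorb2)
    have "0 \<le> (\<Prod>t\<in>S'. lowerP (M t (restrict x (par t))) (x t))"
      using SG x by (intro prod_nonneg local_lowerP_nonneg) (auto simp: S'_def)
    then show ?thesis
      unfolding chain prod.remove[OF finS s] S'_def[symmetric]
      using mult_interval_bounds[OF local_lowerP_nonneg[OF sG x] local _ IH] by blast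
  qed
qed

lemma irr_ext_point_bounds:
  assumes "P \<in> irr_ext G par X M" "x \<in> \<Omega>"
  shows "(\<Prod>t\<in>G. lowerP (M t (restrict x (par t))) (x t)) \<le> P {x} \<Omega> \<and>
         P {x} \<Omega> \<le> (\<Prod>t\<in>G. upperP (M t (restrict x (par t))) (x t))"
  using irr_ext_event_bounds[OF assms ancestral_nodes] event_nodes[OF assms(2)] by simp

end

section \<open>A lexicographic full conditional measure with prescribed local models\<close>

locale credal_net_selection = credal_net G par X M
  for G :: "'n set" and par :: "'n \<Rightarrow> 'n set" and X :: "'n \<Rightarrow> 'v set"
    and M :: "'n \<Rightarrow> ('n \<Rightarrow> 'v) \<Rightarrow> ('v \<Rightarrow> real) set" +
  fixes q :: "'n \<Rightarrow> ('n \<Rightarrow> 'v) \<Rightarrow> 'v \<Rightarrow> real"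
  assumes q_pmf: "\<And>s y. s \<in> G \<Longrightarrow> y \<in> PiE (par s) X \<Longrightarrow> is_pmf_on (X s) (q s y)"
begin

definition weight :: "'n \<Rightarrow> ('n \<Rightarrow> 'v) \<Rightarrow> real" where
  "weight t z = q t (restrict z (par t)) (z t)"

definition zeros :: "('n \<Rightarrow> 'v) \<Rightarrow> 'n set" where
  "zeros z = {t\<in>G. weight t z = 0}"

definition pos_weight :: "('n \<Rightarrow> 'v) \<Rightarrow> real" where
  "pos_weight z = (\<Prod>t\<in>G - zeros z. weight t z)"

definition fewest_zeros :: "('n \<Rightarrow> 'v) set \<Rightarrow> ('n \<Rightarrow> 'v) set" where
  "fewest_zeros B = {z\<in>B. \<forall>z'\<in>B. card (zeros z) \<le> card (zeros z')}"

definition lex_prob :: "('n \<Rightarrow> 'v) set \<Rightarrow> ('n \<Rightarrow> 'v) set \<Rightarrow> real" where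
  "lex_prob A B = (\<Sum>z\<in>A \<inter> fewest_zeros B. pos_weight z) / (\<Sum>z\<in>fewest_zeros B. pos_weight z)"

lemma weight_nonneg: "t \<in> G \<Longrightarrow> z \<in> \<Omega> \<Longrightarrow> 0 \<le> weight t z"
  unfolding weight_def by (rule is_pmf_on_nonneg[OF q_pmf[OF _ restrict_parents_PiE]])

lemma weight_fun_upd:
  assumes "t \<noteq> u" "u \<notin> par t"
  shows "weight t (z(u := v)) = weight t z"
proof -
  have "restrict (z(u := v)) (par t) = restrict z (par t)"
    using assms(2) by (intro restrict_ext) auto
  then show ?thesis
    using assms(1) by (simp add: weight_def)
qed

lemma weight_fun_upd_same:
  assumes "u \<in> G"
  shows "weight u (z(u := v)) = q u (restrict z (par u)) v"
proof -
  have "restrict (z(u := v)) (par u) = restrict z (par u)"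
    using parent_not_self[OF assms] by (intro restrict_ext) auto
  then show ?thesis
    by (simp add: weight_def)
qed

lemma weight_event:
  assumes "z \<in> event G X S y" "t \<in> S" "par t \<subseteq> S"
  shows "weight t z = weight t y"
proof -
  have "restrict z (par t) = restrict y (par t)"
    using assms by (intro restrict_ext) (auto simp: event_def)
  then show ?thesis
    using assms by (simp add: weight_def event_def)
qed

lemma prod_weight_pos:
  assumes "S \<subseteq> G" "z \<in> \<Omega>"
  shows "0 < (\<Prod>t\<in>S - zeros z. weight t z)"
proof (rule prod_pos)
  fix t
  assume "t \<in> S - zeros z"
  then show "0 < weight t z"
    using assms weight_nonneg[of t z] by (auto simp: zeros_def)
qed

lemma fewest_zeros_subset: "fewest_zeros B \<subseteq> B"
  by (auto simp: fewest_zeros_def)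

lemma fewest_zeros_nonempty:
  assumes "B \<noteq> {}"
  shows "fewest_zeros B \<noteq> {}"
proof -
  obtain k where "k \<in> B"
    using assms by blast
  then show ?thesis
    using ex_has_least_nat[of "\<lambda>z. z \<in> B" k "\<lambda>z. card (zeros z)"] by (auto simp: fewest_zeros_def)
qed

lemma fewest_zeros_Int:
  assumes "C \<inter> fewest_zeros B \<noteq> {}"
  shows "fewest_zeros (C \<inter> B) = C \<inter> fewest_zeros B"
proof -
  obtain w where w: "w \<in> C \<inter> B" and least: "\<forall>z'\<in>B. card (zeros w) \<le> card (zeros z')"
    using assms by (auto simp: fewest_zeros_def)
  show ?thesis
  proof (intro set_eqI iffI)
    fix z
    assume z: "z \<in> fewest_zeros (C \<inter> B)"
    then have "card (zeros z) \<le> card (zeros w)"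
      using w by (simp add: fewest_zeros_def)
    with z least show "z \<in> C \<inter> fewest_zeros B"
      by (auto simp: fewest_zeros_def)
  qed (auto simp: fewest_zeros_def)
qed

lemma lex_prob_Int_cond: "lex_prob (A \<inter> B) B = lex_prob A B"
proof -
  have "A \<inter> B \<inter> fewest_zeros B = A \<inter> fewest_zeros B"
    using fewest_zeros_subset by blast
  then show ?thesis
    by (simp add: lex_prob_def)
qed

lemma sum_pos_weight_pos:
  assumes "B \<subseteq> \<Omega>" "C \<inter> fewest_zeros B \<noteq> {}"
  shows "0 < (\<Sum>z\<in>C \<inter> fewest_zeros B. pos_weight z)"
proof (rule sum_pos)
  have "C \<inter> fewest_zeros B \<subseteq> \<Omega>"
    using assms(1) fewest_zeros_subset by blast
  then show "finite (C \<inter> fewest_zeros B)"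
    by (rule finite_subset[OF _ finite_\<Omega>])
  show "0 < pos_weight z" if "z \<in> C \<inter> fewest_zeros B" for z
  proof -
    have "z \<in> \<Omega>"
      using that assms(1) fewest_zeros_subset by blast
    then show ?thesis
      unfolding pos_weight_def by (rule prod_weight_pos[OF order_refl])
  qed
qed fact

lemma lex_prob_mult:
  assumes "B \<subseteq> \<Omega>"
  shows "lex_prob (A \<inter> C) B = lex_prob A (C \<inter> B) * lex_prob C B"
proof (cases "C \<inter> fewest_zeros B = {}")
  case True
  then have "(A \<inter> C) \<inter> fewest_zeros B = {}"
    by blast
  then show ?thesis
    using True by (simp add: lex_prob_def)
next
  case False
  have "0 < (\<Sum>z\<in>C \<inter> fewest_zeros B. pos_weight z)"
    using assms False by (rule sum_pos_weight_pos)
  moreover have "0 < (\<Sum>z\<in>UNIV \<inter> fewest_zeros B. pos_weight z)"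
    using assms False by (intro sum_pos_weight_pos) auto
  moreover have "A \<inter> fewest_zeros (C \<inter> B) = (A \<inter> C) \<inter> fewest_zeros B"
    unfolding fewest_zeros_Int[OF False] by blast
  ultimately show ?thesis
    unfolding lex_prob_def fewest_zeros_Int[OF False] by simp
qed

lemma full_cond_prob_lex_prob: "full_cond_prob \<Omega> lex_prob"
  unfolding full_cond_prob_def
proof (intro conjI allI impI)
  fix B
  assume B: "B \<subseteq> \<Omega> \<and> B \<noteq> {}"
  have sub: "fewest_zeros B \<subseteq> \<Omega>"
    using B fewest_zeros_subset[of B] by blast
  then have fin: "finite (fewest_zeros B)"
    by (rule finite_subset[OF _ finite_\<Omega>])
  have weights: "0 < pos_weight z" if "z \<in> fewest_zeros B" for z
    unfolding pos_weight_def using sub that by (intro prod_weight_pos[OF order_refl]) blast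
  have pos: "0 < (\<Sum>z\<in>fewest_zeros B. pos_weight z)"
    using sum_pos_weight_pos[of B UNIV] B fewest_zeros_nonempty by simp
  show "0 \<le> lex_prob A B" for A
    unfolding lex_prob_def using weights
    by (intro divide_nonneg_nonneg sum_nonneg) (auto intro: less_imp_le)
  show "lex_prob \<Omega> B = 1" "lex_prob B B = 1"
    unfolding lex_prob_def using pos sub fewest_zeros_subset[of B]
    by (simp_all add: Int_absorb1)
  show "lex_prob (A \<union> C) B = lex_prob A B + lex_prob C B" if "A \<subseteq> \<Omega> \<and> C \<subseteq> \<Omega> \<and> A \<inter> C = {}"
    for A C
  proof -
    have "(A \<union> C) \<inter> fewest_zeros B = (A \<inter> fewest_zeros B) \<union> (C \<inter> fewest_zeros B)"
      by blast
    moreover have "(A \<inter> fewest_zeros B) \<inter> (C \<inter> fewest_zeros B) = {}"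
      using that by blast
    ultimately have "(\<Sum>z\<in>(A \<union> C) \<inter> fewest_zeros B. pos_weight z) =
        (\<Sum>z\<in>A \<inter> fewest_zeros B. pos_weight z) + (\<Sum>z\<in>C \<inter> fewest_zeros B. pos_weight z)"
      using fin by (simp add: sum.union_disjoint)
    then show ?thesis
      unfolding lex_prob_def by (simp add: add_divide_distrib)
  qed
next
  fix A B C
  assume "A \<subseteq> \<Omega> \<and> B \<subseteq> \<Omega> \<and> C \<subseteq> \<Omega> \<and> C \<inter> B \<noteq> {}"
  then show "lex_prob (A \<inter> C) B = lex_prob A (C \<inter> B) * lex_prob C B"
    by (intro lex_prob_mult) blast
qed

text \<open>Summing out the nodes of \<open>U\<close>, sinks first.\<close>

lemma sum_prod_weight_event:
  assumes "U \<subseteq> G" and y: "y \<in> \<Omega>"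
  shows "(\<Sum>z\<in>event G X (G - U) y. \<Prod>t\<in>U. weight t z) = 1"
  using assms(1)
proof (induction "card U" arbitrary: U rule: less_induct)
  case less
  show ?case
  proof (cases "U = {}")
    case True
    then show ?thesis
      using event_nodes[OF y] by simp
  next
    case False
    obtain u where u: "u \<in> U" and sink: "\<forall>t\<in>U. u \<notin> par t"
      using exists_sink[OF less.prems False] by blast
    define U' where "U' = U - {u}"
    have finU: "finite U" and uG: "u \<in> G"
      using less.prems u finite_nodes finite_subset by auto
    have prod_upd: "(\<Prod>t\<in>U. weight t (z(u := v))) = q u (restrict z (par u)) v * (\<Prod>t\<in>U'. weight t z)"
      for z v
      unfolding U'_def prod.remove[OF finU u] weight_fun_upd_same[OF uG]
      using sink by (auto intro!: prod.cong weight_fun_upd)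
    have "(\<Sum>z\<in>event G X (G - U) y. \<Prod>t\<in>U. weight t z) =
        (\<Sum>z\<in>event G X (G - U') y. \<Sum>v\<in>X u. \<Prod>t\<in>U. weight t (z(u := v)))"
      using sum_event_insert[OF y uG, of U'] u by (simp add: U'_def insert_absorb)
    also have "\<dots> = (\<Sum>z\<in>event G X (G - U') y. \<Prod>t\<in>U'. weight t z)"
    proof (rule sum.cong[OF refl])
      fix z
      assume "z \<in> event G X (G - U') y"
      then have "z \<in> \<Omega>"
        using event_subset by blast
      then have "(\<Sum>v\<in>X u. q u (restrict z (par u)) v) = 1"
        using q_pmf[OF uG restrict_parents_PiE[OF _ uG]] by (simp add: is_pmf_on_def)
      then show "(\<Sum>v\<in>X u. \<Prod>t\<in>U. weight t (z(u := v))) = (\<Prod>t\<in>U'. weight t z)"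
        unfolding prod_upd by (simp add: sum_distrib_right[symmetric])
    qed
    also have "\<dots> = 1"
      by (rule less.hyps) (use card_Diff1_less[OF finU u] less.prems in \<open>auto simp: U'_def\<close>)
    finally show ?thesis .
  qed
qed

lemma fewest_zeros_event:
  assumes S: "ancestral S" and y: "y \<in> \<Omega>"
  shows "fewest_zeros (event G X S y) = {z \<in> event G X S y. \<forall>t\<in>G - S. weight t z \<noteq> 0}"
proof -
  let ?B = "event G X S y" and ?free_zeros = "\<lambda>z. {t\<in>G - S. weight t z = 0}"
  have SG: "S \<subseteq> G"
    using S by (simp add: ancestral_def)
  have card: "card (zeros z) = card (S \<inter> zeros y) + card (?free_zeros z)" if "z \<in> ?B" for z
  proof -
    have "zeros z = (S \<inter> zeros y) \<union> ?free_zeros z"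
      using weight_event[OF that] S SG by (auto simp: zeros_def ancestral_def)
    then show ?thesis
      by (simp only:) (rule card_Un_disjoint, auto simp: zeros_def intro: finite_subset[OF _ finite_nodes])
  qed
  have no_free_zeros: "card (?free_zeros z) = 0 \<longleftrightarrow> (\<forall>t\<in>G - S. weight t z \<noteq> 0)" for z
    using finite_nodes by auto
  obtain w where w: "w \<in> ?B" "\<forall>t\<in>G - S. weight t w \<noteq> 0"
  proof (rule ccontr)
    assume "\<not> thesis"
    then have "(\<Sum>z\<in>?B. \<Prod>t\<in>G - S. weight t z) = 0"
      using that finite_nodes by (intro sum.neutral) auto
    then show False
      using sum_prod_weight_event[of "G - S", OF _ y] SG by (simp add: double_diff)
  qed
  show ?thesis
  proof (intro set_eqI iffI)
    fix z
    assume "z \<in> fewest_zeros ?B"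
    then have "z \<in> ?B" "card (zeros z) \<le> card (zeros w)"
      using w(1) by (auto simp: fewest_zeros_def)
    then show "z \<in> {z \<in> ?B. \<forall>t\<in>G - S. weight t z \<noteq> 0}"
      using card[of z] card[OF w(1)] no_free_zeros[of z] no_free_zeros[of w] w(2) by simp
  next
    fix z
    assume z: "z \<in> {z \<in> ?B. \<forall>t\<in>G - S. weight t z \<noteq> 0}"
    then have "card (zeros z) = card (S \<inter> zeros y)"
      using card[of z] no_free_zeros[of z] by simp
    then show "z \<in> fewest_zeros ?B"
      using z card by (auto simp: fewest_zeros_def)
  qed
qed

lemma lex_prob_event:
  assumes S: "ancestral S" and y: "y \<in> \<Omega>" and W: "W \<subseteq> event G X S y"
  shows "lex_prob W (event G X S y) = (\<Sum>z\<in>W. \<Prod>t\<in>G - S. weight t z)"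
proof -
  let ?B = "event G X S y" and ?c = "\<Prod>t\<in>S - zeros y. weight t y"
  have SG: "S \<subseteq> G"
    using S by (simp add: ancestral_def)
  have pos_weight_eq: "pos_weight z = ?c * (\<Prod>t\<in>G - S. weight t z)" if "z \<in> fewest_zeros ?B" for z
  proof -
    have z: "z \<in> ?B" "\<forall>t\<in>G - S. weight t z \<noteq> 0"
      using that fewest_zeros_event[OF S y] by auto
    then have "G - zeros z = (S - zeros y) \<union> (G - S)"
      using weight_event[OF z(1)] S SG by (auto simp: zeros_def ancestral_def)
    then have "pos_weight z = (\<Prod>t\<in>(S - zeros y) \<union> (G - S). weight t z)"
      by (simp add: pos_weight_def)
    also have "\<dots> = (\<Prod>t\<in>S - zeros y. weight t z) * (\<Prod>t\<in>G - S. weight t z)"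
      using SG by (intro prod.union_disjoint) (auto intro: finite_subset[OF _ finite_nodes])
    also have "(\<Prod>t\<in>S - zeros y. weight t z) = ?c"
      by (rule prod.cong[OF refl]) (use weight_event[OF z(1)] S in \<open>auto simp: ancestral_def\<close>)
    finally show ?thesis .
  qed
  have weighted_sum: "(\<Sum>z\<in>V \<inter> fewest_zeros ?B. pos_weight z) = ?c * (\<Sum>z\<in>V. \<Prod>t\<in>G - S. weight t z)"
    if V: "V \<subseteq> ?B" for V
  proof -
    have "(\<Sum>z\<in>V \<inter> fewest_zeros ?B. pos_weight z) = (\<Sum>z\<in>V \<inter> fewest_zeros ?B. ?c * (\<Prod>t\<in>G - S. weight t z))"
      by (rule sum.cong[OF refl]) (use pos_weight_eq in blast)
    also have "\<dots> = ?c * (\<Sum>z\<in>V \<inter> fewest_zeros ?B. \<Prod>t\<in>G - S. weight t z)"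
      by (rule sum_distrib_left[symmetric])
    also have "(\<Sum>z\<in>V \<inter> fewest_zeros ?B. \<Prod>t\<in>G - S. weight t z) = (\<Sum>z\<in>V. \<Prod>t\<in>G - S. weight t z)"
    proof (rule sum.mono_neutral_left)
      have "V \<subseteq> \<Omega>"
        using V event_subset by blast
      then show "finite V"
        by (rule finite_subset[OF _ finite_\<Omega>])
      show "\<forall>z\<in>V - V \<inter> fewest_zeros ?B. (\<Prod>t\<in>G - S. weight t z) = 0"
        using V finite_nodes fewest_zeros_event[OF S y] by auto
    qed blast
    finally show ?thesis .
  qed
  have "?B \<inter> fewest_zeros ?B = fewest_zeros ?B"
    using fewest_zeros_subset by blast
  then have "(\<Sum>z\<in>fewest_zeros ?B. pos_weight z) = ?c"
    using weighted_sum[of ?B] sum_prod_weight_event[of "G - S", OF _ y] SG by (simp add: double_diff)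
  then show ?thesis
    unfolding lex_prob_def weighted_sum[OF W] using prod_weight_pos[OF SG y] by simp
qed

lemma lex_prob_point: "x \<in> \<Omega> \<Longrightarrow> lex_prob {x} \<Omega> = (\<Prod>t\<in>G. weight t x)"
  using lex_prob_event[of "{}" x "{x}"] by (simp add: ancestral_def event_empty)

lemma cond_mass_lex_prob:
  assumes s: "s \<in> G" and x: "x \<in> \<Omega>"
  shows "cond_mass G par X lex_prob s x = q s (restrict x (par s))"
proof
  fix v
  let ?N = "nondesc G par s" and ?D = "desc G par s"
  show "cond_mass G par X lex_prob s x v = q s (restrict x (par s)) v"
  proof (cases "v \<in> X s")
    case False
    then show ?thesis
      using q_pmf[OF s restrict_parents_PiE[OF x s]] by (simp add: cond_mass_def is_pmf_on_def)
  next
    case True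
    define x' where "x' = x(s := v)"
    have x': "x' \<in> \<Omega>"
      unfolding x'_def using fun_upd_in_\<Omega>[OF x s True] .
    have G_minus_desc: "G - ?D = insert s ?N"
      using s desc_subset not_in_desc_self by (auto simp: nondesc_def)
    have parents: "par s \<subseteq> G - ?D"
      using parents_subset_nondesc[OF s] by (auto simp: nondesc_def)
    have event: "event G X {s} x' \<inter> event G X ?N x = event G X (G - ?D) x'"
      unfolding G_minus_desc by (auto simp: event_def x'_def nondesc_def)
    have G_minus_nondesc: "G - ?N = insert s ?D"
      using s desc_subset by (auto simp: nondesc_def)
    have "cond_mass G par X lex_prob s x v = lex_prob (event G X {s} x') (event G X ?N x)"
      using True by (simp add: cond_mass_def x'_def)
    also have "\<dots> = lex_prob (event G X {s} x' \<inter> event G X ?N x) (event G X ?N x)"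
      by (rule lex_prob_Int_cond[symmetric])
    also have "\<dots> = (\<Sum>z\<in>event G X (G - ?D) x'. \<Prod>t\<in>G - ?N. weight t z)"
      unfolding event by (rule lex_prob_event[OF ancestral_nondesc x]) (use event in blast)
    also have "\<dots> = (\<Sum>z\<in>event G X (G - ?D) x'. \<Prod>t\<in>insert s ?D. weight t z)"
      unfolding G_minus_nondesc ..
    also have "\<dots> = (\<Sum>z\<in>event G X (G - ?D) x'. q s (restrict x (par s)) v * (\<Prod>t\<in>?D. weight t z))"
    proof (rule sum.cong[OF refl])
      fix z
      assume "z \<in> event G X (G - ?D) x'"
      then have "weight s z = weight s x'"
        using weight_event s parents not_in_desc_self by blast
      also have "\<dots> = q s (restrict x (par s)) v"
        unfolding x'_def using weight_fun_upd_same[OF s] by simp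
      finally show "(\<Prod>t\<in>insert s ?D. weight t z) = q s (restrict x (par s)) v * (\<Prod>t\<in>?D. weight t z)"
        using finite_subset[OF desc_subset finite_nodes] not_in_desc_self by simp
    qed
    also have "\<dots> = q s (restrict x (par s)) v"
      using sum_prod_weight_event[OF desc_subset x'] by (simp add: sum_distrib_left[symmetric])
    finally show ?thesis .
  qed
qed

lemma lex_prob_in_irr_ext:
  assumes "\<And>s y. s \<in> G \<Longrightarrow> y \<in> PiE (par s) X \<Longrightarrow> q s y \<in> M s y"
  shows "lex_prob \<in> irr_ext G par X M"
  unfolding irr_ext_def
  using full_cond_prob_lex_prob cond_mass_lex_prob assms restrict_parents_PiE by auto

end

context credal_net
begin

lemma irr_ext_attains:
  assumes x: "x \<in> \<Omega>"
    and attained: "\<And>s y. s \<in> G \<Longrightarrow> y \<in> PiE (par s) X \<Longrightarrow> \<exists>p\<in>M s y. p (x s) = c s y"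
  shows "(\<Prod>t\<in>G. c t (restrict x (par t))) \<in> (\<lambda>P. P {x} \<Omega>) ` irr_ext G par X M"
proof -
  define q where "q s y = (SOME p. p \<in> M s y \<and> p (x s) = c s y)" for s y
  have q: "q s y \<in> M s y \<and> q s y (x s) = c s y" if "s \<in> G" "y \<in> PiE (par s) X" for s y
    using someI_ex[of "\<lambda>p. p \<in> M s y \<and> p (x s) = c s y"] attained[OF that] unfolding q_def by blast
  interpret credal_net_selection G par X M q
    using q models by unfold_locales (auto simp: local_model_def)
  have "lex_prob {x} \<Omega> = (\<Prod>t\<in>G. c t (restrict x (par t)))"
    unfolding lex_prob_point[OF x] weight_def
    using q restrict_parents_PiE[OF x] by (intro prod.cong) auto
  then show ?thesis
    using lex_prob_in_irr_ext q by (intro image_eqI[where x = lex_prob]) auto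
qed

lemma irr_ext_attains_lowerP:
  assumes "x \<in> \<Omega>"
  shows "(\<Prod>t\<in>G. lowerP (M t (restrict x (par t))) (x t)) \<in> (\<lambda>P. P {x} \<Omega>) ` irr_ext G par X M"
  by (rule irr_ext_attains[OF assms, where c = "\<lambda>s y. lowerP (M s y) (x s)"])
    (rule local_model_lowerP_attained[OF models], use states in auto)

lemma irr_ext_attains_upperP:
  assumes "x \<in> \<Omega>"
  shows "(\<Prod>t\<in>G. upperP (M t (restrict x (par t))) (x t)) \<in> (\<lambda>P. P {x} \<Omega>) ` irr_ext G par X M"
  by (rule irr_ext_attains[OF assms, where c = "\<lambda>s y. upperP (M s y) (x s)"])
    (rule local_model_upperP_attained[OF models], use states in auto)

end

theorem mainTheorem12:
  fixes G :: "'n set" and par :: "'n \<Rightarrow> 'n set" and X :: "'n \<Rightarrow> 'v set"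
    and M :: "'n \<Rightarrow> ('n \<Rightarrow> 'v) \<Rightarrow> ('v \<Rightarrow> real) set"
  assumes dag: "is_dag G par"
    and states: "\<And>s. s \<in> G \<Longrightarrow> finite (X s) \<and> X s \<noteq> {}"
    and models: "\<And>s y. s \<in> G \<Longrightarrow> y \<in> PiE (par s) X \<Longrightarrow> local_model (X s) (M s y)"
    and x: "x \<in> PiE G X"
  shows "lower_irr G par X M {x} = (\<Prod>s\<in>G. lowerP (M s (restrict x (par s))) (x s)) \<and>
         upper_irr G par X M {x} = (\<Prod>s\<in>G. upperP (M s (restrict x (par s))) (x s))"
proof -
  interpret credal_net G par X M
    using dag states models by unfold_locales
  have "lower_irr G par X M {x} = (\<Prod>s\<in>G. lowerP (M s (restrict x (par s))) (x s))"
    unfolding lower_irr_def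
    by (rule cInf_eq_minimum[OF irr_ext_attains_lowerP[OF x]]) (use irr_ext_point_bounds[OF _ x] in blast)
  moreover have "upper_irr G par X M {x} = (\<Prod>s\<in>G. upperP (M s (restrict x (par s))) (x s))"
    unfolding upper_irr_def
    by (rule cSup_eq_maximum[OF irr_ext_attains_upperP[OF x]]) (use irr_ext_point_bounds[OF _ x] in blast)
  ultimately show ?thesis ..
qed

end
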